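(* For all finite multisets $\Gamma,\Delta$ of S4 formulas and all S4 formulas $A,B$: if $\mathrm{G3s}\vdash \Gamma\supset\Delta,\Box A,\Box B$ and $\mathrm{G3s}\vdash\Gamma\supset\Delta,\Box(A\to B),\Box B$, then $\mathrm{G3s}\vdash\Gamma\supset\Delta,\Box B$.
   Context: S4 formulas: $A ::= \bot \mid P \mid A_0\to A_1 \mid \Box A$ ($P$ atomic). Sequents $\Gamma\supset\Delta$ use finite multisets; $\Box\Gamma:=\{\Box C\mid C\in\Gamma\}$. G3s rules: (Ax) $P,\Gamma\supset\Delta,P$ ($P$ atomic); $(\bot\supset)$ $\bot,\Gamma\supset\Delta$; $(\to\supset)$ from $\Gamma\supset\Delta,A$ and $B,\Gamma\supset\Delta$ infer $A\to B,\Gamma\supset\Delta$; $(\supset\to)$ from $A,\Gamma\supset\Delta,B$ infer $\Gamma\supset\Delta,A\to B$; $(\Box\supset)$ from $A,\Box A,\Gamma\supset\Delta$ infer $\Box A,\Gamma\supset\Delta$; $(\supset\Box)$ from $\Box\Gamma\supset A$ infer $\Gamma',\Box\Gamma\supset\Delta',\Box A$. *)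

theory Defs
  imports Main "HOL-Library.Multiset"
begin

datatype 'a fm = Bot | At 'a | Imp "'a fm" "'a fm" | Box "'a fm"

inductive G3s :: "'a fm multiset \<Rightarrow> 'a fm multiset \<Rightarrow> bool" where
  Ax: "G3s (add_mset (At P) \<Gamma>) (add_mset (At P) \<Delta>)"
| BotL: "G3s (add_mset Bot \<Gamma>) \<Delta>"
| ImpL: "G3s \<Gamma> (add_mset A \<Delta>) \<Longrightarrow> G3s (add_mset B \<Gamma>) \<Delta> \<Longrightarrow> G3s (add_mset (Imp A B) \<Gamma>) \<Delta>"
| ImpR: "G3s (add_mset A \<Gamma>) (add_mset B \<Delta>) \<Longrightarrow> G3s \<Gamma> (add_mset (Imp A B) \<Delta>)"
| BoxL: "G3s (add_mset A (add_mset (Box A) \<Gamma>)) \<Delta> \<Longrightarrow> G3s (add_mset (Box A) \<Gamma>) \<Delta>"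
| BoxR: "G3s (image_mset Box \<Gamma>) {#A#} \<Longrightarrow> G3s (\<Gamma>' + image_mset Box \<Gamma>) (add_mset (Box A) \<Delta>')"

end

theory Submission
  imports Defs
begin

text \<open>
  The conclusion follows from the two hypotheses by two cuts, on \<open>Box (Imp A B)\<close> and on
  \<open>Box A\<close>, against the derivable sequent \<open>Box (Imp A B), Box A \<supset> Box B\<close>. The substance is
  admissibility of cut in G3s, proved by induction on the cut formula \<open>C\<close> and, inside it, by
  induction first on the derivation of \<open>\<Gamma> \<supset> C, \<Delta>\<close> until \<open>C\<close> is principal there, and then
  on the derivation of \<open>C, \<Gamma> \<supset> \<Delta>\<close> until \<open>C\<close> is principal on both sides; the principal
  cases reduce to cuts on the immediate subformulas. Sequents are related by submultisets
  throughout, so weakening is absorbed into every induction.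
\<close>

lemma G3s_Ax_mem: "At P \<in># \<Gamma> \<Longrightarrow> At P \<in># \<Delta> \<Longrightarrow> G3s \<Gamma> \<Delta>"
  by (metis G3s.Ax insert_DiffM)

lemma G3s_BotL_mem: "Bot \<in># \<Gamma> \<Longrightarrow> G3s \<Gamma> \<Delta>"
  by (metis G3s.BotL insert_DiffM)

lemma G3s_ImpL_mem:
  "Imp A B \<in># \<Gamma> \<Longrightarrow> G3s (\<Gamma> - {#Imp A B#}) (add_mset A \<Delta>)
    \<Longrightarrow> G3s (add_mset B (\<Gamma> - {#Imp A B#})) \<Delta> \<Longrightarrow> G3s \<Gamma> \<Delta>"
  by (metis G3s.ImpL insert_DiffM)

lemma G3s_ImpR_mem:
  "Imp A B \<in># \<Delta> \<Longrightarrow> G3s (add_mset A \<Gamma>) (add_mset B (\<Delta> - {#Imp A B#})) \<Longrightarrow> G3s \<Gamma> \<Delta>"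
  by (metis G3s.ImpR insert_DiffM)

lemma G3s_BoxL_mem: "Box A \<in># \<Gamma> \<Longrightarrow> G3s (add_mset A \<Gamma>) \<Delta> \<Longrightarrow> G3s \<Gamma> \<Delta>"
  by (metis G3s.BoxL insert_DiffM)

lemma G3s_BoxR_mem:
  "image_mset Box M \<subseteq># \<Gamma> \<Longrightarrow> G3s (image_mset Box M) {#A#} \<Longrightarrow> Box A \<in># \<Delta> \<Longrightarrow> G3s \<Gamma> \<Delta>"
  by (metis G3s.BoxR insert_DiffM subset_mset.diff_add)

lemma add_mset_subset_add_msetE:
  assumes "add_mset a X \<subseteq># add_mset c \<Gamma>"
  obtains "c = a" "X \<subseteq># \<Gamma>" | "a \<in># \<Gamma>" "X \<subseteq># add_mset c (\<Gamma> - {#a#})"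
proof (cases "a = c")
  case True
  with assms have "X \<subseteq># \<Gamma>" by simp
  with True[symmetric] show ?thesis by (rule that(1))
next
  case False
  from assms have "a \<in># add_mset c \<Gamma>" and X: "X \<subseteq># add_mset c \<Gamma> - {#a#}"
    unfolding insert_subset_eq_iff by blast+
  with False have "a \<in># \<Gamma>" by simp
  moreover have "X \<subseteq># add_mset c (\<Gamma> - {#a#})"
    using X by (subst diff_union_swap[OF False])
  ultimately show ?thesis by (rule that(2))
qed

lemma subset_add_mset_not_in: "N \<subseteq># add_mset a \<Gamma> \<Longrightarrow> a \<notin># N \<Longrightarrow> N \<subseteq># \<Gamma>"
  by (simp add: inter_add_left1 subset_mset.inf.absorb_iff2)

lemma subset_add_mset_right: "X \<subseteq># \<Gamma> \<Longrightarrow> X \<subseteq># add_mset a \<Gamma>"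
  using subset_mset.order_trans[of X \<Gamma> "add_mset a \<Gamma>"] by simp

lemma G3s_weaken: "G3s X Y \<Longrightarrow> X \<subseteq># \<Gamma> \<Longrightarrow> Y \<subseteq># \<Delta> \<Longrightarrow> G3s \<Gamma> \<Delta>"
proof (induction X Y arbitrary: \<Gamma> \<Delta> rule: G3s.induct)
  case (Ax P \<Gamma>' \<Delta>')
  then show ?case by (auto simp: insert_subset_eq_iff intro: G3s_Ax_mem)
next
  case (BotL \<Gamma>' \<Delta>')
  then show ?case by (auto simp: insert_subset_eq_iff intro: G3s_BotL_mem)
next
  case (ImpL \<Gamma>' A \<Delta>' B)
  have "Imp A B \<in># \<Gamma>" and \<Gamma>': "\<Gamma>' \<subseteq># \<Gamma> - {#Imp A B#}"
    using ImpL.prems(1) by (simp_all add: insert_subset_eq_iff)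
  show ?case
  proof (rule G3s_ImpL_mem[OF \<open>Imp A B \<in># \<Gamma>\<close>])
    show "G3s (\<Gamma> - {#Imp A B#}) (add_mset A \<Delta>)"
      using \<Gamma>' ImpL.prems(2) by (intro ImpL.IH(1)) simp_all
    show "G3s (add_mset B (\<Gamma> - {#Imp A B#})) \<Delta>"
      using \<Gamma>' ImpL.prems(2) by (intro ImpL.IH(2)) simp_all
  qed
next
  case (ImpR A \<Gamma>' B \<Delta>')
  have "Imp A B \<in># \<Delta>" and \<Delta>': "\<Delta>' \<subseteq># \<Delta> - {#Imp A B#}"
    using ImpR.prems(2) by (simp_all add: insert_subset_eq_iff)
  show ?case
  proof (rule G3s_ImpR_mem[OF \<open>Imp A B \<in># \<Delta>\<close>])
    show "G3s (add_mset A \<Gamma>) (add_mset B (\<Delta> - {#Imp A B#}))"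
      using \<Delta>' ImpR.prems(1) by (intro ImpR.IH) simp_all
  qed
next
  case (BoxL A \<Gamma>' \<Delta>')
  have "Box A \<in># \<Gamma>" using BoxL.prems(1) by (simp add: insert_subset_eq_iff)
  then show ?case
  proof (rule G3s_BoxL_mem)
    show "G3s (add_mset A \<Gamma>) \<Delta>"
      using BoxL.prems by (intro BoxL.IH) simp_all
  qed
next
  case (BoxR \<Gamma>\<^sub>0 A \<Gamma>' \<Delta>')
  then show ?case
    by (meson G3s_BoxR_mem insert_subset_eq_iff mset_subset_eq_add_right subset_mset.order_trans)
qed

lemma G3s_ImpL_inv:
  "G3s X Y \<Longrightarrow> X \<subseteq># add_mset (Imp F G) \<Gamma> \<Longrightarrow> Y \<subseteq># \<Delta>
    \<Longrightarrow> G3s \<Gamma> (add_mset F \<Delta>) \<and> G3s (add_mset G \<Gamma>) \<Delta>"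
proof (induction X Y arbitrary: \<Gamma> \<Delta> rule: G3s.induct)
  case (Ax P \<Gamma>' \<Delta>')
  from Ax.prems(1) have "At P \<in># \<Gamma>"
    by (cases rule: add_mset_subset_add_msetE) simp_all
  moreover have "At P \<in># \<Delta>" using Ax.prems(2) by (simp add: insert_subset_eq_iff)
  ultimately show ?case by (auto intro: G3s_Ax_mem)
next
  case (BotL \<Gamma>' \<Delta>')
  from BotL.prems(1) have "Bot \<in># \<Gamma>"
    by (cases rule: add_mset_subset_add_msetE) simp_all
  then show ?case by (auto intro: G3s_BotL_mem)
next
  case (ImpL \<Gamma>' A \<Delta>' B)
  from ImpL.prems(1) show ?case
  proof (cases rule: add_mset_subset_add_msetE)
    case 1
    have "G3s \<Gamma> (add_mset F \<Delta>)"
      using ImpL.hyps(1) by (rule G3s_weaken) (use 1 ImpL.prems(2) in simp_all)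
    moreover have "G3s (add_mset G \<Gamma>) \<Delta>"
      using ImpL.hyps(2) by (rule G3s_weaken) (use 1 ImpL.prems(2) in simp_all)
    ultimately show ?thesis ..
  next
    case 2
    let ?\<Gamma> = "\<Gamma> - {#Imp A B#}"
    have IH\<^sub>A: "G3s ?\<Gamma> (add_mset F (add_mset A \<Delta>)) \<and> G3s (add_mset G ?\<Gamma>) (add_mset A \<Delta>)"
      using 2 ImpL.prems(2) by (intro ImpL.IH(1)) simp_all
    have IH\<^sub>B: "G3s (add_mset B ?\<Gamma>) (add_mset F \<Delta>) \<and> G3s (add_mset G (add_mset B ?\<Gamma>)) \<Delta>"
      using 2 ImpL.prems(2) by (intro ImpL.IH(2)) (simp_all add: add_mset_commute[of B])
    have "G3s \<Gamma> (add_mset F \<Delta>)"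
      by (rule G3s_ImpL_mem[OF \<open>Imp A B \<in># \<Gamma>\<close>])
        (use IH\<^sub>A IH\<^sub>B in \<open>simp_all add: add_mset_commute\<close>)
    moreover have "G3s (add_mset G \<Gamma>) \<Delta>"
      by (rule G3s_ImpL_mem[of A B])
        (use IH\<^sub>A IH\<^sub>B \<open>Imp A B \<in># \<Gamma>\<close> in \<open>simp_all add: add_mset_commute\<close>)
    ultimately show ?thesis ..
  qed
next
  case (ImpR A \<Gamma>' B \<Delta>')
  let ?\<Delta> = "\<Delta> - {#Imp A B#}"
  have "Imp A B \<in># \<Delta>" and \<Delta>': "\<Delta>' \<subseteq># ?\<Delta>"
    using ImpR.prems(2) by (simp_all add: insert_subset_eq_iff)
  have IH: "G3s (add_mset A \<Gamma>) (add_mset F (add_mset B ?\<Delta>))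
      \<and> G3s (add_mset G (add_mset A \<Gamma>)) (add_mset B ?\<Delta>)"
    using ImpR.prems(1) \<Delta>' by (intro ImpR.IH) (simp_all add: add_mset_commute[of A])
  have "G3s \<Gamma> (add_mset F \<Delta>)"
    by (rule G3s_ImpR_mem[of A B]) (use IH \<open>Imp A B \<in># \<Delta>\<close> in \<open>simp_all add: add_mset_commute\<close>)
  moreover have "G3s (add_mset G \<Gamma>) \<Delta>"
    by (rule G3s_ImpR_mem[OF \<open>Imp A B \<in># \<Delta>\<close>]) (use IH in \<open>simp_all add: add_mset_commute\<close>)
  ultimately show ?case ..
next
  case (BoxL A \<Gamma>' \<Delta>')
  from BoxL.prems(1) show ?case
  proof (cases rule: add_mset_subset_add_msetE)
    case 2
    have IH: "G3s (add_mset A \<Gamma>) (add_mset F \<Delta>) \<and> G3s (add_mset G (add_mset A \<Gamma>)) \<Delta>"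
      using BoxL.prems by (intro BoxL.IH) (simp_all add: add_mset_commute[of _ A])
    have "G3s \<Gamma> (add_mset F \<Delta>)"
      by (rule G3s_BoxL_mem[OF \<open>Box A \<in># \<Gamma>\<close>]) (use IH in simp)
    moreover have "G3s (add_mset G \<Gamma>) \<Delta>"
      by (rule G3s_BoxL_mem[of A]) (use IH \<open>Box A \<in># \<Gamma>\<close> in \<open>simp_all add: add_mset_commute\<close>)
    ultimately show ?thesis ..
  qed simp
next
  case (BoxR \<Gamma>\<^sub>0 A \<Gamma>' \<Delta>')
  have "image_mset Box \<Gamma>\<^sub>0 \<subseteq># add_mset (Imp F G) \<Gamma>"
    using BoxR.prems(1) mset_subset_eq_add_right subset_mset.order_trans by blast
  then have boxed: "image_mset Box \<Gamma>\<^sub>0 \<subseteq># \<Gamma>" by (rule subset_add_mset_not_in) auto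
  have "Box A \<in># \<Delta>" using BoxR.prems(2) by (simp add: insert_subset_eq_iff)
  have "G3s \<Gamma> (add_mset F \<Delta>)"
    using boxed BoxR.hyps by (rule G3s_BoxR_mem) (simp add: \<open>Box A \<in># \<Delta>\<close>)
  moreover have "G3s (add_mset G \<Gamma>) \<Delta>"
    using subset_add_mset_right[OF boxed] BoxR.hyps \<open>Box A \<in># \<Delta>\<close> by (rule G3s_BoxR_mem)
  ultimately show ?case ..
qed

lemma G3s_ImpR_inv:
  "G3s X Y \<Longrightarrow> X \<subseteq># \<Gamma> \<Longrightarrow> Y \<subseteq># add_mset (Imp F G) \<Delta>
    \<Longrightarrow> G3s (add_mset F \<Gamma>) (add_mset G \<Delta>)"
proof (induction X Y arbitrary: \<Gamma> \<Delta> rule: G3s.induct)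
  case (Ax P \<Gamma>' \<Delta>')
  have "At P \<in># \<Gamma>" using Ax.prems(1) by (simp add: insert_subset_eq_iff)
  moreover from Ax.prems(2) have "At P \<in># \<Delta>"
    by (cases rule: add_mset_subset_add_msetE) simp_all
  ultimately show ?case by (auto intro: G3s_Ax_mem)
next
  case (BotL \<Gamma>' \<Delta>')
  then have "Bot \<in># \<Gamma>" by (simp add: insert_subset_eq_iff)
  then show ?case by (auto intro: G3s_BotL_mem)
next
  case (ImpL \<Gamma>' A \<Delta>' B)
  let ?\<Gamma> = "\<Gamma> - {#Imp A B#}"
  have "Imp A B \<in># \<Gamma>" and \<Gamma>': "\<Gamma>' \<subseteq># ?\<Gamma>"
    using ImpL.prems(1) by (simp_all add: insert_subset_eq_iff)
  have IH\<^sub>A: "G3s (add_mset F ?\<Gamma>) (add_mset G (add_mset A \<Delta>))"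
    using \<Gamma>' ImpL.prems(2) by (intro ImpL.IH(1)) (simp_all add: add_mset_commute[of _ A])
  have IH\<^sub>B: "G3s (add_mset F (add_mset B ?\<Gamma>)) (add_mset G \<Delta>)"
    using \<Gamma>' ImpL.prems(2) by (intro ImpL.IH(2)) simp_all
  show ?case
    by (rule G3s_ImpL_mem[of A B])
      (use IH\<^sub>A IH\<^sub>B \<open>Imp A B \<in># \<Gamma>\<close> in \<open>simp_all add: add_mset_commute\<close>)
next
  case (ImpR A \<Gamma>' B \<Delta>')
  from ImpR.prems(2) show ?case
  proof (cases rule: add_mset_subset_add_msetE)
    case 1
    show ?thesis
      using ImpR.hyps by (rule G3s_weaken) (use 1 ImpR.prems(1) in simp_all)
  next
    case 2
    have IH: "G3s (add_mset F (add_mset A \<Gamma>)) (add_mset G (add_mset B (\<Delta> - {#Imp A B#})))"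
      using 2 ImpR.prems(1) by (intro ImpR.IH) (simp_all add: add_mset_commute[of _ B])
    show ?thesis
      by (rule G3s_ImpR_mem[of A B])
        (use IH \<open>Imp A B \<in># \<Delta>\<close> in \<open>simp_all add: add_mset_commute\<close>)
  qed
next
  case (BoxL A \<Gamma>' \<Delta>')
  have "Box A \<in># \<Gamma>" using BoxL.prems(1) by (simp add: insert_subset_eq_iff)
  have IH: "G3s (add_mset F (add_mset A \<Gamma>)) (add_mset G \<Delta>)"
    using BoxL.prems by (intro BoxL.IH) simp_all
  show ?case
    by (rule G3s_BoxL_mem[of A]) (use IH \<open>Box A \<in># \<Gamma>\<close> in \<open>simp_all add: add_mset_commute\<close>)
next
  case (BoxR \<Gamma>\<^sub>0 A \<Gamma>' \<Delta>')
  have boxed: "image_mset Box \<Gamma>\<^sub>0 \<subseteq># \<Gamma>"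
    using BoxR.prems(1) mset_subset_eq_add_right subset_mset.order_trans by blast
  from BoxR.prems(2) show ?case
  proof (cases rule: add_mset_subset_add_msetE)
    case 2
    show ?thesis
      using subset_add_mset_right[OF boxed] BoxR.hyps by (rule G3s_BoxR_mem) (simp add: 2)
  qed simp
qed

lemma image_mset_sup_subset_inj:
  assumes "inj f" "image_mset f M \<subseteq># \<Gamma>" "image_mset f L \<subseteq># \<Gamma>"
  shows "image_mset f (M \<union># L) \<subseteq># \<Gamma>"
proof -
  have "image_mset f (M \<union># L) = image_mset f M \<union># image_mset f L"
    using assms(1) by (simp add: union_mset_def image_mset_diff_if_inj)
  with assms(2,3) show ?thesis by (simp add: subset_mset.sup_least)
qed

text \<open>
  What a derivation of \<open>\<Gamma> \<supset> C, \<Delta>\<close> whose last rule has \<open>C\<close> principal provides: the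
  premise of the right rule for \<open>C\<close>, or membership in \<open>\<Gamma>\<close> for an axiom.
\<close>
fun right_premises :: "'a fm \<Rightarrow> 'a fm multiset \<Rightarrow> 'a fm multiset \<Rightarrow> bool" where
  "right_premises Bot \<Gamma> \<Delta> = False"
| "right_premises (At P) \<Gamma> \<Delta> = (At P \<in># \<Gamma>)"
| "right_premises (Imp A B) \<Gamma> \<Delta> = G3s (add_mset A \<Gamma>) (add_mset B \<Delta>)"
| "right_premises (Box A) \<Gamma> \<Delta> = (\<exists>M. image_mset Box M \<subseteq># \<Gamma> \<and> G3s (image_mset Box M) {#A#})"

lemma right_premises_mono:
  assumes "right_premises C \<Gamma> \<Delta>" "\<Gamma> \<subseteq># \<Gamma>'" "\<Delta> \<subseteq># \<Delta>'"
  shows "right_premises C \<Gamma>' \<Delta>'"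
proof (cases C)
  case (At P)
  with assms(1,2) show ?thesis by (simp add: mset_subset_eqD)
next
  case (Imp A B)
  with assms show ?thesis by (simp add: G3s_weaken)
next
  case (Box A)
  with assms(1,2) show ?thesis by (meson right_premises.simps(4) subset_mset.order_trans)
qed (use assms(1) in simp)

lemma right_premises_ImpL_inv:
  assumes "right_premises C \<Gamma> \<Delta>" "\<Gamma> \<subseteq># add_mset (Imp F G) \<Gamma>'" "\<Delta> \<subseteq># \<Delta>'"
  shows "right_premises C \<Gamma>' (add_mset F \<Delta>') \<and> right_premises C (add_mset G \<Gamma>') \<Delta>'"
proof (cases C)
  case (At P)
  with assms(1,2) have "At P \<in># \<Gamma>'" by (auto dest: mset_subset_eqD)
  with At show ?thesis by simp
next
  case (Imp A B)
  have "G3s (add_mset A \<Gamma>') (add_mset F (add_mset B \<Delta>'))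
      \<and> G3s (add_mset G (add_mset A \<Gamma>')) (add_mset B \<Delta>')"
    by (rule G3s_ImpL_inv[of "add_mset A \<Gamma>" "add_mset B \<Delta>"])
      (use assms Imp in \<open>simp_all add: add_mset_commute[of _ A]\<close>)
  with Imp show ?thesis by (simp add: add_mset_commute)
next
  case (Box A)
  then obtain M where M: "image_mset Box M \<subseteq># \<Gamma>" "G3s (image_mset Box M) {#A#}"
    using assms(1) by auto
  have "image_mset Box M \<subseteq># \<Gamma>'"
    using subset_mset.order_trans[OF M(1) assms(2)] by (rule subset_add_mset_not_in) auto
  then have "image_mset Box M \<subseteq># add_mset G \<Gamma>'" by (rule subset_add_mset_right)
  with \<open>image_mset Box M \<subseteq># \<Gamma>'\<close> M(2) Box show ?thesis by auto
qed (use assms(1) in simp)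

lemma right_premises_ImpR_inv:
  assumes "right_premises C \<Gamma> \<Delta>" "\<Gamma> \<subseteq># \<Gamma>'" "\<Delta> \<subseteq># add_mset (Imp F G) \<Delta>'"
  shows "right_premises C (add_mset F \<Gamma>') (add_mset G \<Delta>')"
proof (cases C)
  case (Imp A B)
  have "G3s (add_mset F (add_mset A \<Gamma>')) (add_mset G (add_mset B \<Delta>'))"
    by (rule G3s_ImpR_inv[of "add_mset A \<Gamma>" "add_mset B \<Delta>"])
      (use assms Imp in \<open>simp_all add: add_mset_commute[of _ B]\<close>)
  with Imp show ?thesis by (simp add: add_mset_commute)
next
  case (At P)
  with assms(1,2) show ?thesis by (simp add: mset_subset_eqD)
next
  case (Box A)
  then obtain M where M: "image_mset Box M \<subseteq># \<Gamma>" "G3s (image_mset Box M) {#A#}"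
    using assms(1) by auto
  have "image_mset Box M \<subseteq># add_mset F \<Gamma>'"
    using subset_mset.order_trans[OF M(1) assms(2)] by (rule subset_add_mset_right)
  with M(2) Box show ?thesis by auto
qed (use assms(1) in simp)

definition cut_admissible :: "'a fm \<Rightarrow> bool" where
  "cut_admissible C \<longleftrightarrow>
    (\<forall>\<Gamma> \<Delta>. G3s \<Gamma> (add_mset C \<Delta>) \<longrightarrow> G3s (add_mset C \<Gamma>) \<Delta> \<longrightarrow> G3s \<Gamma> \<Delta>)"

lemma cut_admissibleD:
  "cut_admissible C \<Longrightarrow> G3s \<Gamma> (add_mset C \<Delta>) \<Longrightarrow> G3s (add_mset C \<Gamma>) \<Delta> \<Longrightarrow> G3s \<Gamma> \<Delta>"
  unfolding cut_admissible_def by blast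

lemma cut_Imp_principal:
  assumes "cut_admissible A" "cut_admissible B"
    and "G3s \<Gamma> (add_mset A \<Delta>)" "G3s (add_mset B \<Gamma>) \<Delta>" "G3s (add_mset A \<Gamma>) (add_mset B \<Delta>)"
  shows "G3s \<Gamma> \<Delta>"
proof -
  have "G3s \<Gamma> (add_mset A (add_mset B \<Delta>))"
    using assms(3) by (rule G3s_weaken) (simp_all add: subset_add_mset_right)
  from assms(1) this assms(5) have "G3s \<Gamma> (add_mset B \<Delta>)" by (rule cut_admissibleD)
  from assms(2) this assms(4) show ?thesis by (rule cut_admissibleD)
qed

lemma cut_Box_principal:
  assumes "cut_admissible A" "image_mset Box M \<subseteq># \<Gamma>" "G3s (image_mset Box M) {#A#}"
    and "G3s (add_mset A \<Gamma>) \<Delta>"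
  shows "G3s \<Gamma> \<Delta>"
proof -
  have "G3s \<Gamma> (add_mset A \<Delta>)"
    using assms(3,2) by (rule G3s_weaken) (simp add: mset_subset_eq_add_mset_cancel)
  from assms(1) this assms(4) show ?thesis by (rule cut_admissibleD)
qed

lemma boxed_context_merge:
  assumes "image_mset Box \<Gamma>\<^sub>0 \<subseteq># add_mset (Box D) \<Gamma>" "D \<in># \<Gamma>\<^sub>0" "image_mset Box M \<subseteq># \<Gamma>"
  obtains K where "image_mset Box K \<subseteq># \<Gamma>" "image_mset Box \<Gamma>\<^sub>0 \<subseteq># add_mset (Box D) (image_mset Box K)"
    "M \<subseteq># K"
proof
  let ?L = "\<Gamma>\<^sub>0 - {#D#}"
  have \<Gamma>\<^sub>0: "image_mset Box \<Gamma>\<^sub>0 = add_mset (Box D) (image_mset Box ?L)"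
    using assms(2) by (metis image_mset_add_mset insert_DiffM)
  have "inj Box" by (simp add: inj_def)
  moreover have "image_mset Box ?L \<subseteq># \<Gamma>"
    using assms(1) by (simp add: \<Gamma>\<^sub>0 mset_subset_eq_add_mset_cancel)
  ultimately show "image_mset Box (M \<union># ?L) \<subseteq># \<Gamma>"
    using assms(3) by (intro image_mset_sup_subset_inj)
  show "image_mset Box \<Gamma>\<^sub>0 \<subseteq># add_mset (Box D) (image_mset Box (M \<union># ?L))"
    by (simp add: \<Gamma>\<^sub>0 mset_subset_eq_add_mset_cancel image_mset_subseteq_mono)
qed simp

lemma cut_by_right_premises:
  fixes C :: "'a fm"
  assumes smaller_cuts: "\<And>D :: 'a fm. size D < size C \<Longrightarrow> cut_admissible D"
  shows "G3s X Y \<Longrightarrow> X \<subseteq># add_mset C \<Gamma> \<Longrightarrow> Y \<subseteq># \<Delta> \<Longrightarrow> right_premises C \<Gamma> \<Delta> \<Longrightarrow> G3s \<Gamma> \<Delta>"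
proof (induction X Y arbitrary: \<Gamma> \<Delta> rule: G3s.induct)
  case (Ax P \<Gamma>' \<Delta>')
  from Ax.prems(1,3) have "At P \<in># \<Gamma>"
    by (cases rule: add_mset_subset_add_msetE) auto
  moreover have "At P \<in># \<Delta>" using Ax.prems(2) by (simp add: insert_subset_eq_iff)
  ultimately show ?case by (rule G3s_Ax_mem)
next
  case (BotL \<Gamma>' \<Delta>')
  from BotL.prems(1,3) have "Bot \<in># \<Gamma>"
    by (cases rule: add_mset_subset_add_msetE) auto
  then show ?case by (rule G3s_BotL_mem)
next
  case (ImpL \<Gamma>' A \<Delta>' B)
  from ImpL.prems(1) show ?case
  proof (cases rule: add_mset_subset_add_msetE)
    case 1
    show ?thesis
    proof (rule cut_Imp_principal)
      show "cut_admissible A" "cut_admissible B" by (rule smaller_cuts, simp add: 1)+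
      show "G3s \<Gamma> (add_mset A \<Delta>)"
        using ImpL.hyps(1) by (rule G3s_weaken) (use 1 ImpL.prems(2) in simp_all)
      show "G3s (add_mset B \<Gamma>) \<Delta>"
        using ImpL.hyps(2) by (rule G3s_weaken) (use 1 ImpL.prems(2) in simp_all)
      show "G3s (add_mset A \<Gamma>) (add_mset B \<Delta>)" using 1 ImpL.prems(3) by simp
    qed
  next
    case 2
    let ?\<Gamma> = "\<Gamma> - {#Imp A B#}"
    have rp: "right_premises C ?\<Gamma> (add_mset A \<Delta>) \<and> right_premises C (add_mset B ?\<Gamma>) \<Delta>"
      by (rule right_premises_ImpL_inv[OF ImpL.prems(3)]) (simp_all add: 2)
    have "G3s ?\<Gamma> (add_mset A \<Delta>)"
      by (rule ImpL.IH(1)[OF _ _ conjunct1[OF rp]]) (simp_all add: 2 ImpL.prems(2))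
    moreover have "G3s (add_mset B ?\<Gamma>) \<Delta>"
      by (rule ImpL.IH(2)[OF _ _ conjunct2[OF rp]])
        (simp_all add: 2 ImpL.prems(2) add_mset_commute[of B])
    ultimately show ?thesis by (rule G3s_ImpL_mem[OF \<open>Imp A B \<in># \<Gamma>\<close>])
  qed
next
  case (ImpR A \<Gamma>' B \<Delta>')
  let ?\<Delta> = "\<Delta> - {#Imp A B#}"
  have "Imp A B \<in># \<Delta>" and \<Delta>': "\<Delta>' \<subseteq># ?\<Delta>"
    using ImpR.prems(2) by (simp_all add: insert_subset_eq_iff)
  have rp: "right_premises C (add_mset A \<Gamma>) (add_mset B ?\<Delta>)"
    by (rule right_premises_ImpR_inv[OF ImpR.prems(3)]) (simp_all add: \<open>Imp A B \<in># \<Delta>\<close>)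
  have "G3s (add_mset A \<Gamma>) (add_mset B ?\<Delta>)"
    by (rule ImpR.IH[OF _ _ rp]) (use ImpR.prems(1) \<Delta>' in \<open>simp_all add: add_mset_commute[of A]\<close>)
  with \<open>Imp A B \<in># \<Delta>\<close> show ?case by (rule G3s_ImpR_mem)
next
  case (BoxL A \<Gamma>' \<Delta>')
  have "G3s (add_mset A \<Gamma>) \<Delta>"
  proof (rule BoxL.IH)
    show "right_premises C (add_mset A \<Gamma>) \<Delta>"
      using BoxL.prems(3) by (rule right_premises_mono) (simp_all add: subset_add_mset_right)
  qed (use BoxL.prems(1,2) in \<open>simp_all add: add_mset_commute[of A]\<close>)
  from BoxL.prems(1) show ?case
  proof (cases rule: add_mset_subset_add_msetE)
    case 1
    have "cut_admissible A" by (rule smaller_cuts) (simp add: 1)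
    moreover obtain M where "image_mset Box M \<subseteq># \<Gamma>" "G3s (image_mset Box M) {#A#}"
      using 1 BoxL.prems(3) by auto
    ultimately show ?thesis using \<open>G3s (add_mset A \<Gamma>) \<Delta>\<close> by (rule cut_Box_principal)
  next
    case 2
    from \<open>Box A \<in># \<Gamma>\<close> \<open>G3s (add_mset A \<Gamma>) \<Delta>\<close> show ?thesis by (rule G3s_BoxL_mem)
  qed
next
  case (BoxR \<Gamma>\<^sub>0 A \<Gamma>' \<Delta>')
  have boxed: "image_mset Box \<Gamma>\<^sub>0 \<subseteq># add_mset C \<Gamma>"
    using BoxR.prems(1) mset_subset_eq_add_right subset_mset.order_trans by blast
  have "Box A \<in># \<Delta>" using BoxR.prems(2) by (simp add: insert_subset_eq_iff)
  show ?case
  proof (cases "C \<in># image_mset Box \<Gamma>\<^sub>0")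
    case True
    then obtain D where D: "C = Box D" "D \<in># \<Gamma>\<^sub>0" by auto
    then obtain M where M: "image_mset Box M \<subseteq># \<Gamma>" "G3s (image_mset Box M) {#D#}"
      using BoxR.prems(3) by auto
    obtain K where K: "image_mset Box K \<subseteq># \<Gamma>"
      "image_mset Box \<Gamma>\<^sub>0 \<subseteq># add_mset (Box D) (image_mset Box K)" "M \<subseteq># K"
      using boxed[unfolded D(1)] D(2) M(1) by (rule boxed_context_merge)
    have "G3s (image_mset Box K) {#A#}"
    proof (rule BoxR.IH)
      show "image_mset Box \<Gamma>\<^sub>0 \<subseteq># add_mset C (image_mset Box K)" using K(2) D(1) by simp
      show "right_premises C (image_mset Box K) {#A#}"
        unfolding D(1) right_premises.simps using M(2) image_mset_subseteq_mono[OF K(3)] by blast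
    qed simp
    with K(1) show ?thesis using \<open>Box A \<in># \<Delta>\<close> by (rule G3s_BoxR_mem)
  next
    case False
    with boxed have "image_mset Box \<Gamma>\<^sub>0 \<subseteq># \<Gamma>" by (rule subset_add_mset_not_in)
    then show ?thesis using BoxR.hyps \<open>Box A \<in># \<Delta>\<close> by (rule G3s_BoxR_mem)
  qed
qed

lemma cut_principal:
  fixes C :: "'a fm"
  assumes smaller_cuts: "\<And>D :: 'a fm. size D < size C \<Longrightarrow> cut_admissible D"
    and "right_premises C \<Gamma> \<Delta>" "G3s (add_mset C \<Gamma>) \<Delta>"
  shows "G3s \<Gamma> \<Delta>"
  using smaller_cuts assms(3) subset_mset.order_refl subset_mset.order_refl assms(2)
  by (rule cut_by_right_premises)

lemma cut_by_left_derivation: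
  fixes C :: "'a fm"
  assumes smaller_cuts: "\<And>D :: 'a fm. size D < size C \<Longrightarrow> cut_admissible D"
  shows "G3s X Y \<Longrightarrow> X \<subseteq># \<Gamma> \<Longrightarrow> Y \<subseteq># add_mset C \<Delta> \<Longrightarrow> G3s (add_mset C \<Gamma>) \<Delta> \<Longrightarrow> G3s \<Gamma> \<Delta>"
proof (induction X Y arbitrary: \<Gamma> \<Delta> rule: G3s.induct)
  case (Ax P \<Gamma>' \<Delta>')
  have "At P \<in># \<Gamma>" using Ax.prems(1) by (simp add: insert_subset_eq_iff)
  from Ax.prems(2) show ?case
  proof (cases rule: add_mset_subset_add_msetE)
    case 1
    with \<open>At P \<in># \<Gamma>\<close> have "right_premises C \<Gamma> \<Delta>" by simp
    from cut_principal[OF smaller_cuts this Ax.prems(3)] show ?thesis .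
  next
    case 2
    show ?thesis by (rule G3s_Ax_mem[OF \<open>At P \<in># \<Gamma>\<close>]) (simp add: 2)
  qed
next
  case (BotL \<Gamma>' \<Delta>')
  then have "Bot \<in># \<Gamma>" by (simp add: insert_subset_eq_iff)
  then show ?case by (rule G3s_BotL_mem)
next
  case (ImpL \<Gamma>' A \<Delta>' B)
  let ?\<Gamma> = "\<Gamma> - {#Imp A B#}"
  have "Imp A B \<in># \<Gamma>" and \<Gamma>': "\<Gamma>' \<subseteq># ?\<Gamma>"
    using ImpL.prems(1) by (simp_all add: insert_subset_eq_iff)
  have inv: "G3s (add_mset C ?\<Gamma>) (add_mset A \<Delta>) \<and> G3s (add_mset B (add_mset C ?\<Gamma>)) \<Delta>"
    by (rule G3s_ImpL_inv[OF ImpL.prems(3)]) (simp_all add: \<open>Imp A B \<in># \<Gamma>\<close>)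
  have "G3s ?\<Gamma> (add_mset A \<Delta>)"
    by (rule ImpL.IH(1)) (use \<Gamma>' ImpL.prems(2) inv in \<open>simp_all add: add_mset_commute[of A]\<close>)
  moreover have "G3s (add_mset B ?\<Gamma>) \<Delta>"
    by (rule ImpL.IH(2)) (use \<Gamma>' ImpL.prems(2) inv in \<open>simp_all add: add_mset_commute\<close>)
  ultimately show ?case by (rule G3s_ImpL_mem[OF \<open>Imp A B \<in># \<Gamma>\<close>])
next
  case (ImpR A \<Gamma>' B \<Delta>')
  from ImpR.prems(2) show ?case
  proof (cases rule: add_mset_subset_add_msetE)
    case 1
    have "G3s (add_mset A \<Gamma>) (add_mset B \<Delta>)"
      using ImpR.hyps by (rule G3s_weaken) (use 1 ImpR.prems(1) in simp_all)
    with 1 have "right_premises C \<Gamma> \<Delta>" by simp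
    from cut_principal[OF smaller_cuts this ImpR.prems(3)] show ?thesis .
  next
    case 2
    let ?\<Delta> = "\<Delta> - {#Imp A B#}"
    have inv: "G3s (add_mset A (add_mset C \<Gamma>)) (add_mset B ?\<Delta>)"
      by (rule G3s_ImpR_inv[OF ImpR.prems(3)]) (simp_all add: 2)
    have "G3s (add_mset A \<Gamma>) (add_mset B ?\<Delta>)"
      by (rule ImpR.IH) (use 2 ImpR.prems(1) inv in \<open>simp_all add: add_mset_commute\<close>)
    then show ?thesis by (rule G3s_ImpR_mem[OF \<open>Imp A B \<in># \<Delta>\<close>])
  qed
next
  case (BoxL A \<Gamma>' \<Delta>')
  have "Box A \<in># \<Gamma>" using BoxL.prems(1) by (simp add: insert_subset_eq_iff)
  have weak: "G3s (add_mset C (add_mset A \<Gamma>)) \<Delta>"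
    using BoxL.prems(3) by (rule G3s_weaken) (simp_all add: add_mset_commute[of C] subset_add_mset_right)
  have "G3s (add_mset A \<Gamma>) \<Delta>"
    by (rule BoxL.IH) (use BoxL.prems(1,2) weak in \<open>simp_all add: insert_subset_eq_iff\<close>)
  then show ?case by (rule G3s_BoxL_mem[OF \<open>Box A \<in># \<Gamma>\<close>])
next
  case (BoxR \<Gamma>\<^sub>0 A \<Gamma>' \<Delta>')
  have boxed: "image_mset Box \<Gamma>\<^sub>0 \<subseteq># \<Gamma>"
    using BoxR.prems(1) mset_subset_eq_add_right subset_mset.order_trans by blast
  from BoxR.prems(2) show ?case
  proof (cases rule: add_mset_subset_add_msetE)
    case 1
    with boxed BoxR.hyps have "right_premises C \<Gamma> \<Delta>" by auto
    from cut_principal[OF smaller_cuts this BoxR.prems(3)] show ?thesis .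
  next
    case 2
    show ?thesis by (rule G3s_BoxR_mem[OF boxed BoxR.hyps]) (simp add: 2)
  qed
qed

theorem G3s_cut: "G3s \<Gamma> (add_mset C \<Delta>) \<Longrightarrow> G3s (add_mset C \<Gamma>) \<Delta> \<Longrightarrow> G3s \<Gamma> \<Delta>"
proof -
  have "cut_admissible C"
  proof (induction C rule: measure_induct_rule[of size])
    case (less C)
    show ?case
      unfolding cut_admissible_def
      using cut_by_left_derivation[OF less.IH _ subset_mset.order_refl subset_mset.order_refl] by blast
  qed
  then show "G3s \<Gamma> (add_mset C \<Delta>) \<Longrightarrow> G3s (add_mset C \<Gamma>) \<Delta> \<Longrightarrow> G3s \<Gamma> \<Delta>"
    by (rule cut_admissibleD)
qed

lemma G3s_id: "G3s (add_mset A \<Gamma>) (add_mset A \<Delta>)"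
proof (induction A arbitrary: \<Gamma> \<Delta>)
  case Bot
  show ?case by (rule G3s.BotL)
next
  case (At P)
  show ?case by (rule G3s.Ax)
next
  case (Imp A B)
  have "G3s (add_mset A (add_mset (Imp A B) \<Gamma>)) (add_mset B \<Delta>)"
    by (rule G3s_ImpL_mem[of A B])
      (use Imp.IH(1)[of \<Gamma> "add_mset B \<Delta>"] Imp.IH(2)[of "add_mset A \<Gamma>" \<Delta>]
        in \<open>simp_all add: add_mset_commute\<close>)
  then show ?case by (rule G3s.ImpR)
next
  case (Box A)
  have "G3s (image_mset Box {#A#}) {#A#}"
    by (rule G3s_BoxL_mem[of A]) (use Box.IH[of "{#Box A#}" "{#}"] in simp_all)
  from G3s_BoxR_mem[OF _ this] show ?case by simp
qed

lemma G3s_K: "G3s (add_mset (Box (Imp A B)) (add_mset (Box A) \<Gamma>)) (add_mset (Box B) \<Delta>)"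
proof -
  have "G3s {#Imp A B, A, Box A, Box (Imp A B)#} {#B#}"
    by (rule G3s_ImpL_mem[of A B])
      (use G3s_id[of A "{#Box A, Box (Imp A B)#}" "{#B#}"]
        G3s_id[of B "{#A, Box A, Box (Imp A B)#}" "{#}"] in \<open>simp_all add: add_mset_commute\<close>)
  then have "G3s {#A, Box A, Box (Imp A B)#} {#B#}"
    by (rule G3s_BoxL_mem[rotated]) simp
  then have "G3s {#Box A, Box (Imp A B)#} {#B#}"
    by (rule G3s_BoxL_mem[rotated]) simp
  then have "G3s (image_mset Box {#A, Imp A B#}) {#B#}" by simp
  from G3s_BoxR_mem[OF _ this] show ?thesis by simp
qed

theorem mainTheorem3:
  fixes \<Gamma> \<Delta> :: "'a fm multiset" and A B :: "'a fm"
  assumes "G3s \<Gamma> (\<Delta> + {#Box A, Box B#})"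
      and "G3s \<Gamma> (\<Delta> + {#Box (Imp A B), Box B#})"
  shows "G3s \<Gamma> (\<Delta> + {#Box B#})"
proof -
  have "G3s (add_mset (Box A) \<Gamma>) (add_mset (Box (Imp A B)) (add_mset (Box B) \<Delta>))"
    using assms(2) by (rule G3s_weaken) (simp_all add: subset_add_mset_right add_mset_commute)
  from this G3s_K have cut\<^sub>1: "G3s (add_mset (Box A) \<Gamma>) (add_mset (Box B) \<Delta>)"
    by (rule G3s_cut)
  have "G3s \<Gamma> (add_mset (Box A) (add_mset (Box B) \<Delta>))"
    using assms(1) by simp
  from this cut\<^sub>1 have "G3s \<Gamma> (add_mset (Box B) \<Delta>)" by (rule G3s_cut)
  then show ?thesis by simp
qed

end
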